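(* Let $G$ be a $k$-degenerate graph with maximum degree $\Delta(G)$ and let $H$ be an $l$-degenerate graph. Then $AT(G+_Q H)\le \max\{2\Delta(G)-2,\,k+l\}+1$.
   Context: A graph is $k$-degenerate if its vertices can be successively deleted so that each deleted vertex has degree at most $k$ at the time of deletion. For an orientation $D$, a subdigraph is Eulerian if every vertex has equal in- and outdegree in it; $D$ is an AT-orientation if the numbers of Eulerian subgraphs with an even and with an odd number of arcs differ; $AT(G)$ is the smallest $k$ such that $G$ has an AT-orientation of maximum outdegree at most $k-1$. $Q(G)$ has vertex set $V(G)\cup E(G)$: it is $S(G)$ (each edge $e=xy$ replaced by the path $x\,e\,y$) plus edges $ee'$ whenever edges $e,e'$ are adjacent in $G$. $G+_Q H$ has vertex set $(V(G)\cup E(G))\times V(H)$, with $(u_1,u_2)\sim(v_1,v_2)$ iff [$u_1=v_1\in V(G)$ and $u_2v_2\in E(H)$] or [$u_2=v_2$ and $u_1v_1\in E(Q(G))$]. *)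

theory Defs
  imports Main
begin

type_synonym 'a ugraph = "'a set \<times> 'a set set"

abbreviation verts :: "'a ugraph \<Rightarrow> 'a set" where "verts G \<equiv> fst G"
abbreviation edges :: "'a ugraph \<Rightarrow> 'a set set" where "edges G \<equiv> snd G"

definition graph :: "'a ugraph \<Rightarrow> bool" where
  "graph G \<longleftrightarrow> finite (verts G) \<and>
     (\<forall>e\<in>edges G. \<exists>x y. x \<noteq> y \<and> x \<in> verts G \<and> y \<in> verts G \<and> e = {x, y})"

definition deg :: "'a ugraph \<Rightarrow> 'a \<Rightarrow> nat" where
  "deg G v = card {u \<in> verts G. {u, v} \<in> edges G}"

definition max_deg :: "'a ugraph \<Rightarrow> nat" where
  "max_deg G = (if verts G = {} then 0 else Max (deg G ` verts G))"

text \<open>k-degenerate: the vertices can be deleted one after another (in the order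
of the list vs) such that each deleted vertex has degree at most k in the graph
that remains at the time of its deletion (i.e. among itself and later vertices).\<close>
definition degenerate :: "nat \<Rightarrow> 'a ugraph \<Rightarrow> bool" where
  "degenerate k G \<longleftrightarrow> (\<exists>vs. distinct vs \<and> set vs = verts G \<and>
     (\<forall>i < length vs. card {j. i < j \<and> j < length vs \<and> {vs ! i, vs ! j} \<in> edges G} \<le> k))"

definition orientation :: "'a ugraph \<Rightarrow> ('a \<times> 'a) set \<Rightarrow> bool" where
  "orientation G D \<longleftrightarrow> (\<forall>(x, y)\<in>D. {x, y} \<in> edges G) \<and>
     (\<forall>x y. {x, y} \<in> edges G \<longrightarrow> ((x, y) \<in> D \<longleftrightarrow> (y, x) \<notin> D))"

definition outdeg :: "('a \<times> 'a) set \<Rightarrow> 'a \<Rightarrow> nat" where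
  "outdeg D v = card {u. (v, u) \<in> D}"

definition indeg :: "('a \<times> 'a) set \<Rightarrow> 'a \<Rightarrow> nat" where
  "indeg D v = card {u. (u, v) \<in> D}"

definition eulerian_subgraphs :: "('a \<times> 'a) set \<Rightarrow> ('a \<times> 'a) set set" where
  "eulerian_subgraphs D = {S. S \<subseteq> D \<and> (\<forall>v. indeg S v = outdeg S v)}"

definition AT_orientation :: "'a ugraph \<Rightarrow> ('a \<times> 'a) set \<Rightarrow> bool" where
  "AT_orientation G D \<longleftrightarrow> orientation G D \<and>
     card {S \<in> eulerian_subgraphs D. even (card S)} \<noteq> card {S \<in> eulerian_subgraphs D. odd (card S)}"

definition AT :: "'a ugraph \<Rightarrow> nat" where
  "AT G = (LEAST k. \<exists>D. AT_orientation G D \<and> (\<forall>v\<in>verts G. outdeg D v + 1 \<le> k))"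

definition Qgraph :: "'a ugraph \<Rightarrow> ('a + 'a set) ugraph" where
  "Qgraph G = (Inl ` verts G \<union> Inr ` edges G,
     {{Inl x, Inr e} | x e. e \<in> edges G \<and> x \<in> e} \<union>
     {{Inr e, Inr e'} | e e'. e \<in> edges G \<and> e' \<in> edges G \<and> e \<noteq> e' \<and> e \<inter> e' \<noteq> {}})"

definition Qprod :: "'a ugraph \<Rightarrow> 'b ugraph \<Rightarrow> (('a + 'a set) \<times> 'b) ugraph" where
  "Qprod G H = (verts (Qgraph G) \<times> verts H,
     {{(Inl v, u2), (Inl v, v2)} | v u2 v2. v \<in> verts G \<and> {u2, v2} \<in> edges H} \<union>
     {{(u1, w), (v1, w)} | u1 v1 w. w \<in> verts H \<and> {u1, v1} \<in> edges (Qgraph G)})"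

end

theory Submission
  imports Defs "HOL-Library.Product_Lexorder"
begin

text \<open>Orient every edge of \<open>G +\<^sub>Q H\<close> towards the endpoint with the larger key. The
  resulting orientation is acyclic, so its only Eulerian subgraph is the empty one and it is
  an AT-orientation; hence \<open>AT\<close> is at most one more than the largest number of neighbours
  with a larger key. Keys on \<open>G +\<^sub>Q H\<close> are compared lexicographically, first by a degeneracy
  order of \<open>H\<close>, then by a key on \<open>Q(G)\<close>. The latter either puts all vertices of \<open>G\<close> before
  all edges (if \<open>\<Delta>(G) \<le> k\<close>; an edge then sees at most \<open>2\<Delta> - 2\<close> adjacent edges), or inserts
  every edge just before its later endpoint in a degeneracy order of \<open>G\<close>: then a vertex sees
  at most \<open>k\<close> later edges, and an edge \<open>ab\<close> with \<open>a\<close> first sees \<open>b\<close>, at most \<open>\<Delta> - 1\<close>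
  edges at \<open>b\<close> and at most \<open>k - 1\<close> edges at \<open>a\<close>, in total at most \<open>2\<Delta> - 2\<close> as \<open>k < \<Delta>\<close>.
  Inside a copy of \<open>Q(G)\<close> an original vertex gains at most \<open>l\<close> later neighbours from \<open>H\<close>,
  an edge vertex none.\<close>

definition fwd_nbrs :: "'a ugraph \<Rightarrow> ('a \<Rightarrow> 'k::linorder) \<Rightarrow> 'a \<Rightarrow> 'a set" where
  "fwd_nbrs G key v = {u. {v, u} \<in> edges G \<and> key v < key u}"

definition proper_key :: "'a ugraph \<Rightarrow> ('a \<Rightarrow> 'k) \<Rightarrow> bool" where
  "proper_key G key \<longleftrightarrow> (\<forall>x y. {x, y} \<in> edges G \<longrightarrow> key x \<noteq> key y)"

definition orient_by :: "'a ugraph \<Rightarrow> ('a \<Rightarrow> 'k::linorder) \<Rightarrow> ('a \<times> 'a) set" where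
  "orient_by G key = {(x, y). {x, y} \<in> edges G \<and> key x < key y}"

definition incident :: "'a ugraph \<Rightarrow> 'a \<Rightarrow> 'a set set" where
  "incident G v = {e \<in> edges G. v \<in> e}"

lemma graph_edgeE:
  assumes "graph G" "e \<in> edges G"
  obtains x y where "x \<noteq> y" "x \<in> verts G" "y \<in> verts G" "e = {x, y}"
  using assms unfolding graph_def by metis

lemma graph_edge_ends:
  assumes "graph G" "{x, y} \<in> edges G"
  shows "x \<in> verts G" "y \<in> verts G" "x \<noteq> y"
  using graph_edgeE[OF assms] by (metis doubleton_eq_iff)+

lemma finite_verts: "graph G \<Longrightarrow> finite (verts G)"
  by (simp add: graph_def)

lemma finite_edges:
  assumes "graph G"
  shows "finite (edges G)"
proof -
  have "edges G \<subseteq> Pow (verts G)"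
    using assms unfolding graph_def by auto
  then show ?thesis
    using finite_verts[OF assms] by (meson finite_Pow_iff finite_subset)
qed

lemma finite_fwd_nbrs: "graph G \<Longrightarrow> finite (fwd_nbrs G key v)"
  using finite_verts graph_edge_ends(2) unfolding fwd_nbrs_def
  by (metis (no_types, lifting) finite_subset mem_Collect_eq subsetI)

lemma finite_incident: "graph G \<Longrightarrow> finite (incident G v)"
  by (simp add: finite_edges incident_def)

lemma deg_le_max_deg: "graph G \<Longrightarrow> v \<in> verts G \<Longrightarrow> deg G v \<le> max_deg G"
  by (auto simp: max_deg_def finite_verts)

lemma card_incident_le_max_deg:
  assumes "graph G" "v \<in> verts G"
  shows "card (incident G v) \<le> max_deg G"
proof -
  have "incident G v \<subseteq> (\<lambda>u. {u, v}) ` {u \<in> verts G. {u, v} \<in> edges G}"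
  proof
    fix e assume "e \<in> incident G v"
    then obtain x y where "x \<noteq> y" "x \<in> verts G" "y \<in> verts G" "e = {x, y}" "v \<in> e" "e \<in> edges G"
      using graph_edgeE[OF assms(1)] unfolding incident_def by blast
    then show "e \<in> (\<lambda>u. {u, v}) ` {u \<in> verts G. {u, v} \<in> edges G}"
      by (auto simp: insert_commute)
  qed
  then have "card (incident G v) \<le> card ((\<lambda>u. {u, v}) ` {u \<in> verts G. {u, v} \<in> edges G})"
    by (intro card_mono) (simp_all add: finite_verts assms(1))
  also have "\<dots> \<le> deg G v"
    unfolding deg_def by (rule card_image_le) (simp add: finite_verts assms(1))
  also have "\<dots> \<le> max_deg G"
    using assms by (rule deg_le_max_deg)
  finally show ?thesis .
qed

lemma card_adjacent_edges_le:
  assumes "graph G" "e \<in> edges G" "e = {a, b}"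
  shows "card ((incident G a \<union> incident G b) - {e}) \<le> 2 * max_deg G - 2"
proof -
  have ab: "a \<in> verts G" "b \<in> verts G"
    using graph_edge_ends assms by metis+
  have e: "e \<in> incident G a" "e \<in> incident G b"
    using assms unfolding incident_def by auto
  have "card ((incident G a \<union> incident G b) - {e}) \<le> card (incident G a - {e}) + card (incident G b - {e})"
    unfolding Un_Diff by (rule card_Un_le)
  also have "\<dots> = (card (incident G a) - 1) + (card (incident G b) - 1)"
    using e by (simp add: finite_incident assms(1))
  also have "\<dots> \<le> 2 * max_deg G - 2"
    using card_incident_le_max_deg[OF assms(1) ab(1)] card_incident_le_max_deg[OF assms(1) ab(2)]
    by linarith
  finally show ?thesis .
qed

lemma degenerate_imp_key:
  assumes "graph G" "degenerate k G"
  obtains r :: "'a \<Rightarrow> nat" where "proper_key G r" "\<forall>v\<in>verts G. card (fwd_nbrs G r v) \<le> k"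
proof -
  obtain vs where vs: "distinct vs" "set vs = verts G"
    "\<forall>i < length vs. card {j. i < j \<and> j < length vs \<and> {vs ! i, vs ! j} \<in> edges G} \<le> k"
    using assms(2) unfolding degenerate_def by blast
  define r where "r v = (THE i. i < length vs \<and> vs ! i = v)" for v
  have r: "r v < length vs" "vs ! r v = v" if "v \<in> verts G" for v
    unfolding r_def using theI'[OF distinct_Ex1[OF vs(1), of v]] that vs(2) by blast+
  have "proper_key G r"
    unfolding proper_key_def using r graph_edge_ends[OF assms(1)] by metis
  moreover have "card (fwd_nbrs G r v) \<le> k" if v: "v \<in> verts G" for v
  proof -
    let ?J = "{j. r v < j \<and> j < length vs \<and> {vs ! r v, vs ! j} \<in> edges G}"
    have "fwd_nbrs G r v \<subseteq> (!) vs ` ?J"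
    proof
      fix u assume "u \<in> fwd_nbrs G r v"
      then have "u \<in> verts G" "{v, u} \<in> edges G" "r v < r u"
        using graph_edge_ends[OF assms(1)] by (auto simp: fwd_nbrs_def)
      then show "u \<in> (!) vs ` ?J"
        using r[of u] r[OF v] by (intro image_eqI[of _ _ "r u"]) auto
    qed
    then have "card (fwd_nbrs G r v) \<le> card ((!) vs ` ?J)"
      by (intro card_mono) auto
    also have "\<dots> \<le> card ?J"
      by (rule card_image_le) auto
    also have "\<dots> \<le> k"
      using vs(3) r[OF v] by blast
    finally show ?thesis .
  qed
  ultimately show ?thesis
    using that by blast
qed

subsection \<open>Acyclic orientations\<close>

lemma eulerian_subgraphs_acyclic:
  fixes key :: "'a \<Rightarrow> 'k::linorder"
  assumes "finite D" and increasing: "\<And>x y. (x, y) \<in> D \<Longrightarrow> key x < key y"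
  shows "eulerian_subgraphs D = {{}}"
proof -
  have "S = {}" if "S \<subseteq> D" and balanced: "\<And>v. indeg S v = outdeg S v" for S
  proof (rule ccontr)
    assume "S \<noteq> {}"
    have "finite S"
      using \<open>S \<subseteq> D\<close> \<open>finite D\<close> finite_subset by blast
    \<comment> \<open>an arc whose head has the largest key cannot be followed by an arc of \<open>S\<close>\<close>
    define m where "m = Max ((key \<circ> snd) ` S)"
    have top: "key y \<le> m" if "(x, y) \<in> S" for x y
      unfolding m_def using \<open>finite S\<close> that by (intro Max_ge) force+
    have "m \<in> (key \<circ> snd) ` S"
      unfolding m_def using \<open>finite S\<close> \<open>S \<noteq> {}\<close> by (intro Max_in) auto
    then obtain a b where ab: "(a, b) \<in> S" "key b = m"
      by auto
    have "{u. (u, b) \<in> S} \<subseteq> fst ` S"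
      by force
    then have "finite {u. (u, b) \<in> S}"
      using \<open>finite S\<close> finite_subset by blast
    with ab(1) have "indeg S b > 0"
      by (auto simp: indeg_def card_gt_0_iff)
    then obtain c where bc: "(b, c) \<in> S"
      unfolding balanced outdeg_def by (metis card.empty empty_Collect_eq less_irrefl)
    then have "key b < key c"
      using increasing \<open>S \<subseteq> D\<close> by blast
    moreover have "key c \<le> key b"
      using top[OF bc] ab(2) by simp
    ultimately show False
      by simp
  qed
  then have "eulerian_subgraphs D \<subseteq> {{}}"
    by (auto simp: eulerian_subgraphs_def)
  moreover have "{} \<in> eulerian_subgraphs D"
    by (simp add: eulerian_subgraphs_def indeg_def outdeg_def)
  ultimately show ?thesis
    by blast
qed

lemma orientation_orient_by:
  "proper_key G key \<Longrightarrow> orientation G (orient_by G key)"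
  unfolding orientation_def orient_by_def proper_key_def
  by (auto simp: insert_commute) (metis linorder_neqE)

lemma outdeg_orient_by: "outdeg (orient_by G key) v = card (fwd_nbrs G key v)"
  by (simp add: outdeg_def orient_by_def fwd_nbrs_def)

lemma AT_le_by_key:
  fixes key :: "'a \<Rightarrow> 'k::linorder"
  assumes "graph G" "proper_key G key"
    and bound: "\<forall>v\<in>verts G. card (fwd_nbrs G key v) \<le> d"
  shows "AT G \<le> d + 1"
proof -
  let ?D = "orient_by G key"
  have "?D \<subseteq> verts G \<times> verts G"
    using graph_edge_ends[OF assms(1)] by (auto simp: orient_by_def)
  then have "finite ?D"
    using finite_verts[OF assms(1)] finite_subset by blast
  then have "eulerian_subgraphs ?D = {{}}"
    by (rule eulerian_subgraphs_acyclic[where key = key]) (simp add: orient_by_def)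
  then have "AT_orientation G ?D"
    using orientation_orient_by[OF assms(2)] by (simp add: AT_orientation_def Collect_conv_if)
  moreover have "\<forall>v\<in>verts G. outdeg ?D v + 1 \<le> d + 1"
    using bound by (simp add: outdeg_orient_by)
  ultimately show ?thesis
    unfolding AT_def by (blast intro: Least_le)
qed

subsection \<open>The graph \<open>Q(G)\<close>\<close>

lemma Qgraph_edge_Inl:
  "{Inl v, q} \<in> edges (Qgraph G) \<longleftrightarrow> (\<exists>e. q = Inr e \<and> e \<in> edges G \<and> v \<in> e)"
  unfolding Qgraph_def by (auto simp: doubleton_eq_iff)

lemma Qgraph_edge_Inr:
  "{Inr e, q} \<in> edges (Qgraph G) \<longleftrightarrow> e \<in> edges G \<and> ((\<exists>x. q = Inl x \<and> x \<in> e) \<or>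
     (\<exists>e'. q = Inr e' \<and> e' \<in> edges G \<and> e' \<noteq> e \<and> e \<inter> e' \<noteq> {}))"
  unfolding Qgraph_def by (auto simp: doubleton_eq_iff)

lemma Qgraph_nbrs_Inl: "{q. {Inl v, q} \<in> edges (Qgraph G)} = Inr ` incident G v"
  by (auto simp: Qgraph_edge_Inl incident_def)

lemma Qgraph_nbrs_Inr_subset:
  assumes "e = {a, b}"
  shows "{q. {Inr e, q} \<in> edges (Qgraph G)} \<subseteq> Inl ` e \<union> Inr ` ((incident G a \<union> incident G b) - {e})"
  using assms by (auto simp: Qgraph_edge_Inr incident_def)

lemma graph_Qgraph:
  assumes "graph G"
  shows "graph (Qgraph G)"
proof -
  have ends: "x \<in> verts G" if "x \<in> e" "e \<in> edges G" for x e
    using graph_edgeE[OF assms that(2)] that(1) by auto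
  have "\<exists>x y. x \<noteq> y \<and> x \<in> verts (Qgraph G) \<and> y \<in> verts (Qgraph G) \<and> f = {x, y}"
    if "f \<in> edges (Qgraph G)" for f
  proof -
    from that consider (incidence) x e where "f = {Inl x, Inr e}" "e \<in> edges G" "x \<in> e"
      | (adjacency) e e' where "f = {Inr e, Inr e'}" "e \<in> edges G" "e' \<in> edges G" "e \<noteq> e'"
      unfolding Qgraph_def by auto
    then show ?thesis
    proof cases
      case incidence
      then show ?thesis
        using ends by (intro exI[of _ "Inl x"] exI[of _ "Inr e"]) (auto simp: Qgraph_def)
    next
      case adjacency
      then show ?thesis
        by (intro exI[of _ "Inr e"] exI[of _ "Inr e'"]) (auto simp: Qgraph_def)
    qed
  qed
  moreover have "finite (verts (Qgraph G))"
    using finite_verts[OF assms] finite_edges[OF assms] by (simp add: Qgraph_def)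
  ultimately show ?thesis
    unfolding graph_def by blast
qed

lemma proper_key_QgraphI:
  assumes "inj_on (key \<circ> Inr) (edges G)" and "\<And>v e. key (Inl v) \<noteq> key (Inr e)"
  shows "proper_key (Qgraph G) key"
  unfolding proper_key_def
proof (intro allI impI)
  fix q q' assume edge: "{q, q'} \<in> edges (Qgraph G)"
  show "key q \<noteq> key q'"
  proof (cases q)
    case (Inl v)
    then show ?thesis
      using edge assms(2) by (auto simp: Qgraph_edge_Inl)
  next
    case (Inr e)
    with edge consider (vertex) x where "q' = Inl x"
      | (edge) e' where "q' = Inr e'" "e \<in> edges G" "e' \<in> edges G" "e' \<noteq> e"
      by (auto simp: Qgraph_edge_Inr)
    then show ?thesis
    proof cases
      case vertex
      then show ?thesis
        using Inr assms(2) by metis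
    next
      case edge
      then show ?thesis
        using Inr inj_onD[OF assms(1)] by fastforce
    qed
  qed
qed

lemma Qgraph_key_vertices_first:
  assumes "graph G" "max_deg G \<le> k"
  obtains key :: "'a + 'a set \<Rightarrow> nat \<times> nat \<times> nat" where "proper_key (Qgraph G) key"
    "\<forall>v\<in>verts G. card (fwd_nbrs (Qgraph G) key (Inl v)) \<le> k"
    "\<forall>e\<in>edges G. card (fwd_nbrs (Qgraph G) key (Inr e)) \<le> 2 * max_deg G - 2"
proof -
  obtain f :: "'a set \<Rightarrow> nat" where f: "inj_on f (edges G)"
    using finite_imp_inj_to_nat_seg[OF finite_edges[OF assms(1)]] by blast
  define key :: "'a + 'a set \<Rightarrow> nat \<times> nat \<times> nat" where
    "key = case_sum (\<lambda>v. (0, 0, 0)) (\<lambda>e. (1, f e, 0))"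
  have "proper_key (Qgraph G) key"
    using f by (intro proper_key_QgraphI) (auto simp: key_def inj_on_def)
  moreover have "card (fwd_nbrs (Qgraph G) key (Inl v)) \<le> k" if "v \<in> verts G" for v
  proof -
    have "fwd_nbrs (Qgraph G) key (Inl v) \<subseteq> Inr ` incident G v"
      using Qgraph_nbrs_Inl[of v G] by (auto simp: fwd_nbrs_def)
    then have "card (fwd_nbrs (Qgraph G) key (Inl v)) \<le> card (incident G v)"
      by (rule surj_card_le[rotated]) (simp add: finite_incident assms(1))
    also have "\<dots> \<le> k"
      using card_incident_le_max_deg[OF assms(1) that] assms(2) by linarith
    finally show ?thesis .
  qed
  moreover have "card (fwd_nbrs (Qgraph G) key (Inr e)) \<le> 2 * max_deg G - 2" if "e \<in> edges G" for e
  proof -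
    obtain a b where ab: "e = {a, b}"
      using graph_edgeE[OF assms(1) \<open>e \<in> edges G\<close>] by metis
    let ?adj = "(incident G a \<union> incident G b) - {e}"
    have "fwd_nbrs (Qgraph G) key (Inr e) \<subseteq> Inr ` ?adj"
      using Qgraph_nbrs_Inr_subset[OF ab, of G] by (auto simp: fwd_nbrs_def key_def)
    then have "card (fwd_nbrs (Qgraph G) key (Inr e)) \<le> card ?adj"
      by (rule surj_card_le[rotated]) (simp add: finite_incident assms(1))
    also have "\<dots> \<le> 2 * max_deg G - 2"
      using card_adjacent_edges_le[OF assms(1) that ab] .
    finally show ?thesis .
  qed
  ultimately show ?thesis
    using that by blast
qed

definition later_edges :: "'a ugraph \<Rightarrow> ('a \<Rightarrow> nat) \<Rightarrow> 'a \<Rightarrow> 'a set set" where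
  "later_edges G r v = {e \<in> incident G v. r v < Max (r ` e)}"

lemma finite_later_edges: "graph G \<Longrightarrow> finite (later_edges G r v)"
  by (simp add: later_edges_def finite_incident)

lemma card_later_edges_le:
  assumes "graph G"
  shows "card (later_edges G r v) \<le> card (fwd_nbrs G r v)"
proof -
  have "later_edges G r v \<subseteq> (\<lambda>u. {v, u}) ` fwd_nbrs G r v"
  proof
    fix e assume e: "e \<in> later_edges G r v"
    then have "e \<in> edges G" "v \<in> e"
      by (auto simp: later_edges_def incident_def)
    then obtain u where "e = {v, u}"
      using graph_edgeE[OF assms] by (metis insert_commute insertE singletonD)
    then show "e \<in> (\<lambda>u. {v, u}) ` fwd_nbrs G r v"
      using e by (auto simp: fwd_nbrs_def later_edges_def incident_def max_def split: if_splits)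
  qed
  then show ?thesis
    by (rule surj_card_le[rotated]) (simp add: finite_fwd_nbrs assms)
qed

text \<open>Each edge is placed just before its later endpoint; \<open>f\<close> only breaks ties between edges.\<close>

definition Qkey_of_order :: "('a \<Rightarrow> nat) \<Rightarrow> ('a set \<Rightarrow> nat) \<Rightarrow> 'a + 'a set \<Rightarrow> nat \<times> nat \<times> nat" where
  "Qkey_of_order r f = case_sum (\<lambda>v. (r v, 1, 0)) (\<lambda>e. (Max (r ` e), 0, f e))"

lemma fwd_nbrs_Qkey_of_order_Inl:
  "fwd_nbrs (Qgraph G) (Qkey_of_order r f) (Inl v) \<subseteq> Inr ` later_edges G r v"
proof
  fix q assume q: "q \<in> fwd_nbrs (Qgraph G) (Qkey_of_order r f) (Inl v)"
  then have "{Inl v, q} \<in> edges (Qgraph G)"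
    by (simp add: fwd_nbrs_def)
  then obtain e where "q = Inr e" "e \<in> incident G v"
    by (auto simp: Qgraph_edge_Inl incident_def)
  moreover have "r v < Max (r ` e)"
    using q \<open>q = Inr e\<close> by (simp add: fwd_nbrs_def Qkey_of_order_def)
  ultimately show "q \<in> Inr ` later_edges G r v"
    by (simp add: later_edges_def)
qed

lemma fwd_nbrs_Qkey_of_order_Inr:
  assumes "e = {a, b}" "r a < r b"
  shows "fwd_nbrs (Qgraph G) (Qkey_of_order r f) (Inr e)
    \<subseteq> {Inl b} \<union> Inr ` ((later_edges G r a - {e}) \<union> (incident G b - {e}))"
proof
  fix q assume q: "q \<in> fwd_nbrs (Qgraph G) (Qkey_of_order r f) (Inr e)"
  then have "q \<in> Inl ` e \<union> Inr ` ((incident G a \<union> incident G b) - {e})"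
    using Qgraph_nbrs_Inr_subset[OF assms(1), of G] by (auto simp: fwd_nbrs_def)
  moreover have "r b \<le> r z" if "q = Inl z" for z
    using q that assms by (auto simp: fwd_nbrs_def Qkey_of_order_def)
  moreover have "r b \<le> Max (r ` e')" if "q = Inr e'" for e'
    using q that assms by (auto simp: fwd_nbrs_def Qkey_of_order_def)
  ultimately show "q \<in> {Inl b} \<union> Inr ` ((later_edges G r a - {e}) \<union> (incident G b - {e}))"
    using assms by (auto simp: later_edges_def)
qed

lemma card_fwd_nbrs_Qkey_of_order_Inr_le:
  assumes "graph G" "proper_key G r" "\<forall>v\<in>verts G. card (fwd_nbrs G r v) \<le> k" "k < max_deg G"
    and e: "e \<in> edges G"
  shows "card (fwd_nbrs (Qgraph G) (Qkey_of_order r f) (Inr e)) \<le> 2 * max_deg G - 2"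
proof -
  obtain x y where xy: "e = {x, y}" "x \<in> verts G" "y \<in> verts G"
    using graph_edgeE[OF assms(1) e] by metis
  have "r x \<noteq> r y"
    using assms(2) e xy(1) by (simp add: proper_key_def)
  then obtain a b where ab: "e = {a, b}" "r a < r b" "a \<in> verts G" "b \<in> verts G"
    using xy by (cases "r x < r y") (auto simp: insert_commute intro!: that)
  have "e \<in> later_edges G r a"
    using e ab by (simp add: later_edges_def incident_def)
  have later_a: "card (later_edges G r a) \<le> k"
    using card_later_edges_le[OF assms(1), of r a] assms(3) ab(3) by fastforce
  let ?adj = "(later_edges G r a - {e}) \<union> (incident G b - {e})"
  have "finite ?adj"
    by (simp add: finite_later_edges finite_incident assms(1))
  have "card (fwd_nbrs (Qgraph G) (Qkey_of_order r f) (Inr e)) \<le> card ({Inl b} \<union> Inr ` ?adj)"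
    using fwd_nbrs_Qkey_of_order_Inr[OF ab(1,2)] \<open>finite ?adj\<close> by (intro card_mono) auto
  also have "\<dots> \<le> 1 + card (Inr ` ?adj :: ('a + 'a set) set)"
    using card_Un_le[of "{Inl b}" "Inr ` ?adj"] by simp
  also have "\<dots> \<le> 1 + card ?adj"
    using card_image_le[OF \<open>finite ?adj\<close>] by simp
  also have "\<dots> \<le> 1 + (card (later_edges G r a - {e}) + card (incident G b - {e}))"
    using card_Un_le by simp
  also have "\<dots> = 1 + ((card (later_edges G r a) - 1) + (card (incident G b) - 1))"
    using \<open>e \<in> later_edges G r a\<close> e ab(1)
    by (simp add: finite_later_edges finite_incident assms(1) incident_def)
  also have "\<dots> \<le> 2 * max_deg G - 2"
    using \<open>e \<in> later_edges G r a\<close> finite_later_edges[OF assms(1)] later_a assms(4)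
      card_incident_le_max_deg[OF assms(1) ab(4)]
    by (cases "card (later_edges G r a)") auto
  finally show ?thesis .
qed

lemma Qgraph_key_degenerate:
  assumes "graph G" "degenerate k G" "k < max_deg G"
  obtains key :: "'a + 'a set \<Rightarrow> nat \<times> nat \<times> nat" where "proper_key (Qgraph G) key"
    "\<forall>v\<in>verts G. card (fwd_nbrs (Qgraph G) key (Inl v)) \<le> k"
    "\<forall>e\<in>edges G. card (fwd_nbrs (Qgraph G) key (Inr e)) \<le> 2 * max_deg G - 2"
proof -
  obtain f :: "'a set \<Rightarrow> nat" where f: "inj_on f (edges G)"
    using finite_imp_inj_to_nat_seg[OF finite_edges[OF assms(1)]] by blast
  obtain r :: "'a \<Rightarrow> nat" where r: "proper_key G r" "\<forall>v\<in>verts G. card (fwd_nbrs G r v) \<le> k"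
    using degenerate_imp_key[OF assms(1,2)] by blast
  have "proper_key (Qgraph G) (Qkey_of_order r f)"
    using f by (intro proper_key_QgraphI) (auto simp: Qkey_of_order_def inj_on_def)
  moreover have "card (fwd_nbrs (Qgraph G) (Qkey_of_order r f) (Inl v)) \<le> k" if "v \<in> verts G" for v
  proof -
    have "card (fwd_nbrs (Qgraph G) (Qkey_of_order r f) (Inl v)) \<le> card (later_edges G r v)"
      using fwd_nbrs_Qkey_of_order_Inl
      by (rule surj_card_le[rotated]) (simp add: finite_later_edges assms(1))
    also have "\<dots> \<le> card (fwd_nbrs G r v)"
      using assms(1) by (rule card_later_edges_le)
    finally show ?thesis
      using r(2) that by fastforce
  qed
  moreover have "\<forall>e\<in>edges G. card (fwd_nbrs (Qgraph G) (Qkey_of_order r f) (Inr e)) \<le> 2 * max_deg G - 2"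
    using card_fwd_nbrs_Qkey_of_order_Inr_le[OF assms(1) r assms(3)] by blast
  ultimately show ?thesis
    using that by blast
qed

lemma Qgraph_key:
  assumes "graph G" "degenerate k G"
  obtains key :: "'a + 'a set \<Rightarrow> nat \<times> nat \<times> nat" where "proper_key (Qgraph G) key"
    "\<forall>v\<in>verts G. card (fwd_nbrs (Qgraph G) key (Inl v)) \<le> k"
    "\<forall>e\<in>edges G. card (fwd_nbrs (Qgraph G) key (Inr e)) \<le> 2 * max_deg G - 2"
proof (cases "max_deg G \<le> k")
  case True
  show ?thesis
    by (rule Qgraph_key_vertices_first[OF assms(1) True]) (blast intro: that)
next
  case False
  then have "k < max_deg G"
    by simp
  show ?thesis
    by (rule Qgraph_key_degenerate[OF assms \<open>k < max_deg G\<close>]) (blast intro: that)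
qed

subsection \<open>The product \<open>G +\<^sub>Q H\<close>\<close>

lemma Qprod_edgeE:
  assumes "{p, p'} \<in> edges (Qprod G H)"
  obtains (H_edge) v w w' where "p = (Inl v, w)" "p' = (Inl v, w')" "v \<in> verts G" "{w, w'} \<in> edges H"
    | (Q_edge) q q' w where "p = (q, w)" "p' = (q', w)" "w \<in> verts H" "{q, q'} \<in> edges (Qgraph G)"
proof -
  from assms consider
      (H_edge) v w w' where "{p, p'} = {(Inl v, w), (Inl v, w')}" "v \<in> verts G" "{w, w'} \<in> edges H"
    | (Q_edge) q q' w where "{p, p'} = {(q, w), (q', w)}" "w \<in> verts H" "{q, q'} \<in> edges (Qgraph G)"
    unfolding Qprod_def by auto
  then show ?thesis
  proof cases
    case H_edge
    then consider "p = (Inl v, w)" "p' = (Inl v, w')" | "p = (Inl v, w')" "p' = (Inl v, w)"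
      by (auto simp: doubleton_eq_iff)
    then show ?thesis
      using H_edge that(1) by cases (simp_all add: insert_commute)
  next
    case Q_edge
    then consider "p = (q, w)" "p' = (q', w)" | "p = (q', w)" "p' = (q, w)"
      by (auto simp: doubleton_eq_iff)
    then show ?thesis
      using Q_edge that(2) by cases (simp_all add: insert_commute)
  qed
qed

lemma graph_Qprod:
  assumes "graph G" "graph H"
  shows "graph (Qprod G H)"
proof -
  have "\<exists>x y. x \<noteq> y \<and> x \<in> verts (Qprod G H) \<and> y \<in> verts (Qprod G H) \<and> f = {x, y}"
    if "f \<in> edges (Qprod G H)" for f
  proof -
    from that consider
        (H_edge) v w w' where "f = {(Inl v, w), (Inl v, w')}" "v \<in> verts G" "{w, w'} \<in> edges H"
      | (Q_edge) q q' w where "f = {(q, w), (q', w)}" "w \<in> verts H" "{q, q'} \<in> edges (Qgraph G)"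
      unfolding Qprod_def by auto
    then show ?thesis
    proof cases
      case H_edge
      then show ?thesis
        using graph_edge_ends[OF assms(2)]
        by (intro exI[of _ "(Inl v, w)"] exI[of _ "(Inl v, w')"]) (auto simp: Qprod_def Qgraph_def)
    next
      case Q_edge
      then show ?thesis
        using graph_edge_ends[OF graph_Qgraph[OF assms(1)]]
        by (intro exI[of _ "(q, w)"] exI[of _ "(q', w)"]) (auto simp: Qprod_def)
    qed
  qed
  moreover have "finite (verts (Qprod G H))"
    using finite_verts[OF graph_Qgraph[OF assms(1)]] finite_verts[OF assms(2)] by (simp add: Qprod_def)
  ultimately show ?thesis
    unfolding graph_def by blast
qed

lemma proper_key_Qprod:
  assumes "proper_key (Qgraph G) kQ" "proper_key H kH"
  shows "proper_key (Qprod G H) (\<lambda>(q, w). (kH w, kQ q))"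
  unfolding proper_key_def
proof (intro allI impI)
  fix p p' assume "{p, p'} \<in> edges (Qprod G H)"
  then show "(case p of (q, w) \<Rightarrow> (kH w, kQ q)) \<noteq> (case p' of (q, w) \<Rightarrow> (kH w, kQ q))"
    by (cases rule: Qprod_edgeE) (use assms in \<open>auto simp: proper_key_def\<close>)
qed

lemma fwd_nbrs_Qprod_subset:
  "fwd_nbrs (Qprod G H) (\<lambda>(q, w). (kH w, kQ q)) (q, w)
     \<subseteq> (if isl q then Pair q ` fwd_nbrs H kH w else {})
       \<union> (\<lambda>q'. (q', w)) ` fwd_nbrs (Qgraph G) kQ q"
proof
  fix p assume "p \<in> fwd_nbrs (Qprod G H) (\<lambda>(q, w). (kH w, kQ q)) (q, w)"
  then have edge: "{(q, w), p} \<in> edges (Qprod G H)"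
    and less: "(kH w, kQ q) < (case p of (q', w') \<Rightarrow> (kH w', kQ q'))"
    by (auto simp: fwd_nbrs_def)
  from edge show "p \<in> (if isl q then Pair q ` fwd_nbrs H kH w else {})
      \<union> (\<lambda>q'. (q', w)) ` fwd_nbrs (Qgraph G) kQ q"
    by (cases rule: Qprod_edgeE) (use less in \<open>auto simp: fwd_nbrs_def\<close>)
qed

lemma card_fwd_nbrs_Qprod_le:
  assumes "graph G" "graph H"
    and vertex_bound: "\<forall>v\<in>verts G. card (fwd_nbrs (Qgraph G) kQ (Inl v)) \<le> dV"
    and edge_bound: "\<forall>e\<in>edges G. card (fwd_nbrs (Qgraph G) kQ (Inr e)) \<le> dE"
    and H_bound: "\<forall>w\<in>verts H. card (fwd_nbrs H kH w) \<le> dH"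
    and "p \<in> verts (Qprod G H)"
  shows "card (fwd_nbrs (Qprod G H) (\<lambda>(q, w). (kH w, kQ q)) p) \<le> max dE (dV + dH)"
proof -
  obtain q w where p: "p = (q, w)" "q \<in> verts (Qgraph G)" "w \<in> verts H"
    using assms(6) by (auto simp: Qprod_def)
  let ?A = "if isl q then Pair q ` fwd_nbrs H kH w else {}"
  let ?B = "(\<lambda>q'. (q', w)) ` fwd_nbrs (Qgraph G) kQ q"
  have "card (fwd_nbrs (Qprod G H) (\<lambda>(q, w). (kH w, kQ q)) p) \<le> card (?A \<union> ?B)"
    unfolding p(1) using fwd_nbrs_Qprod_subset
    by (rule card_mono[rotated]) (simp add: finite_fwd_nbrs graph_Qgraph assms(1,2))
  also have "\<dots> \<le> card ?A + card ?B"
    by (rule card_Un_le)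
  also have "\<dots> \<le> (if isl q then card (fwd_nbrs H kH w) else 0) + card (fwd_nbrs (Qgraph G) kQ q)"
    by (intro add_mono) (simp_all add: card_image_le finite_fwd_nbrs assms(1,2) graph_Qgraph)
  also have "\<dots> \<le> max dE (dV + dH)"
  proof (cases q)
    case (Inl v)
    then have "v \<in> verts G"
      using p(2) by (auto simp: Qgraph_def)
    then show ?thesis
      using Inl p(3) vertex_bound H_bound by (fastforce simp: le_max_iff_disj)
  next
    case (Inr e)
    then have "e \<in> edges G"
      using p(2) by (auto simp: Qgraph_def)
    then show ?thesis
      using Inr edge_bound by (simp add: le_max_iff_disj)
  qed
  finally show ?thesis .
qed

theorem corollary3p8:
  fixes G :: "'a ugraph" and H :: "'b ugraph" and k l :: nat
  assumes "graph G" and "graph H"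
    and "degenerate k G" and "degenerate l H"
  shows "AT (Qprod G H) \<le> max (2 * max_deg G - 2) (k + l) + 1"
proof -
  obtain kQ :: "'a + 'a set \<Rightarrow> nat \<times> nat \<times> nat" where kQ: "proper_key (Qgraph G) kQ"
    "\<forall>v\<in>verts G. card (fwd_nbrs (Qgraph G) kQ (Inl v)) \<le> k"
    "\<forall>e\<in>edges G. card (fwd_nbrs (Qgraph G) kQ (Inr e)) \<le> 2 * max_deg G - 2"
    using Qgraph_key[OF assms(1,3)] by blast
  obtain kH :: "'b \<Rightarrow> nat" where kH: "proper_key H kH" "\<forall>w\<in>verts H. card (fwd_nbrs H kH w) \<le> l"
    using degenerate_imp_key[OF assms(2,4)] by blast
  show ?thesis
  proof (rule AT_le_by_key)
    show "graph (Qprod G H)"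
      using assms(1,2) by (rule graph_Qprod)
    show "proper_key (Qprod G H) (\<lambda>(q, w). (kH w, kQ q))"
      using kQ(1) kH(1) by (rule proper_key_Qprod)
    show "\<forall>p\<in>verts (Qprod G H). card (fwd_nbrs (Qprod G H) (\<lambda>(q, w). (kH w, kQ q)) p)
        \<le> max (2 * max_deg G - 2) (k + l)"
      using card_fwd_nbrs_Qprod_le[OF assms(1,2) kQ(2,3) kH(2)] by blast
  qed
qed

end
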